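(* Let $m,n$ be nonnegative integers with $0\leqslant m\leqslant n$, let $\varepsilon\in\{+1,-1\}$, and let $z\in\mathbb{C}\setminus(-\infty,1]$. Then \begin{align*} \frac{\mathrm{d}^{m}}{\mathrm{d}z^{m}}\bigl[P_{n}(z)\ln(z+\varepsilon)\bigr] &= \frac{(2m)!}{2^{m}m!}C_{n-m}^{(m+1/2)}(z)\ln(z+\varepsilon)\\ &\quad -(-\varepsilon)^{n}(-1)^{m}(z+\varepsilon)^{-m}\sum_{k=0}^{m-1}\varepsilon^{k}\frac{(k+n)!\,(m-k-1)!}{k!\,(n-k)!}\left(\frac{z+\varepsilon}{2}\right)^{k}\\ &\quad +\frac{(-\varepsilon)^{n+m}}{2^{m}}\sum_{k=0}^{n-m}(-\varepsilon)^{k}\frac{(k+n+m)!}{k!\,(k+m)!\,(n-m-k)!}\,[\psi(k+m+1)-\psi(k+1)]\left(\frac{z+\varepsilon}{2}\right)^{k}. \end{align*}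
   Context: $P_n(z)$ denotes the Legendre polynomial of degree $n$. $C_{j}^{(\alpha)}(z)$ denotes the Gegenbauer (ultraspherical) polynomial of degree $j$ and parameter $\alpha$. $\psi(\zeta)=\Gamma'(\zeta)/\Gamma(\zeta)$ is the digamma function. The complex plane is cut along the real axis from $-\infty$ to $+1$; for $z\in\mathbb{C}\setminus(-\infty,1]$, $\ln(z\pm1)$ denotes the principal branch of the logarithm. The case $\varepsilon=+1$ concerns $\ln(z+1)$ and the case $\varepsilon=-1$ concerns $\ln(z-1)$. Empty sums are zero. *)

theory Defs
  imports "HOL-Analysis.Analysis"
begin

definition legendreP :: "nat \<Rightarrow> complex \<Rightarrow> complex" where
  "legendreP n z = (\<Sum>k\<le>n div 2. (-1)^k * of_nat (n choose k) * of_nat ((2*n - 2*k) choose n)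
                        * z ^ (n - 2*k)) / 2 ^ n"

definition gegenbauerC :: "nat \<Rightarrow> complex \<Rightarrow> complex \<Rightarrow> complex" where
  "gegenbauerC j a z = (\<Sum>k\<le>j div 2. (-1)^k * pochhammer a (j - k)
                        / (fact k * fact (j - 2*k)) * (2*z) ^ (j - 2*k))"

end

theory Submission
  imports Defs
begin

text \<open>Put \<open>w = z + \<epsilon>\<close>.  Since \<open>z\<^sup>2 - 1 = w (w - 2\<epsilon>)\<close>, Rodrigues' formula turns \<open>P n\<close> into an
  explicit polynomial in \<open>w\<close>.  The \<open>m\<close>-th derivative of \<open>w ^ j * Ln w\<close> is a pole of order \<open>m - j\<close>
  when \<open>j < m\<close>, and a falling factorial times \<open>w ^ (j - m) * (Ln w + H j - H (j - m))\<close> when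
  \<open>j \<ge> m\<close>.  The poles give the finite sum, the harmonic numbers give the digamma differences,
  and the coefficients of \<open>Ln w\<close> recombine into the \<open>m\<close>-th derivative of \<open>P n\<close>, which the
  explicit series of both polynomials identify with \<open>(2m)!/(2^m m!) C (n - m) (m + 1/2)\<close>.\<close>

definition falling_fact :: "nat \<Rightarrow> nat \<Rightarrow> 'a::comm_semiring_1" where
  "falling_fact k m = (\<Prod>i<m. of_nat (k - i))"

lemma falling_fact_0 [simp]: "falling_fact k 0 = 1"
  by (simp add: falling_fact_def)

lemma falling_fact_Suc: "falling_fact k (Suc m) = falling_fact k m * of_nat (k - m)"
  by (simp add: falling_fact_def)

lemma falling_fact_eq_0: "k < m \<Longrightarrow> falling_fact k m = 0"
  unfolding falling_fact_def by (rule prod_zero) (auto intro: bexI[of _ k])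

lemma falling_fact_eq_fact:
  "m \<le> k \<Longrightarrow> falling_fact k m = (fact k / fact (k - m) :: 'a::field_char_0)"
proof (induction m)
  case (Suc m)
  then have "fact (k - m) = of_nat (k - m) * (fact (k - Suc m) :: 'a)"
    by (metis Suc_diff_Suc fact_Suc less_eq_Suc_le)
  with Suc show ?case by (simp add: falling_fact_Suc field_simps)
qed simp

lemma higher_deriv_shifted_power_sum:
  fixes a :: "'a::real_normed_field"
  assumes "finite K"
  shows "(deriv ^^ m) (\<lambda>z. \<Sum>k\<in>K. c k * (z + a) ^ e k)
       = (\<lambda>z. \<Sum>k\<in>K. c k * falling_fact (e k) m * (z + a) ^ (e k - m))"
proof (induction m)
  case (Suc m)
  have "((\<lambda>z. \<Sum>k\<in>K. c k * falling_fact (e k) m * (z + a) ^ (e k - m)) has_field_derivative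
         (\<Sum>k\<in>K. c k * falling_fact (e k) (Suc m) * (z + a) ^ (e k - Suc m))) (at z)" for z
  proof (rule DERIV_sum)
    fix k
    have "((\<lambda>z. c k * falling_fact (e k) m * (z + a) ^ (e k - m)) has_field_derivative
        c k * falling_fact (e k) m * (of_nat (e k - m) * (z + a) ^ (e k - m - 1) * 1)) (at z)"
      by (intro derivative_eq_intros) auto
    then show "((\<lambda>z. c k * falling_fact (e k) m * (z + a) ^ (e k - m)) has_field_derivative
        c k * falling_fact (e k) (Suc m) * (z + a) ^ (e k - Suc m)) (at z)"
      by (simp add: falling_fact_Suc mult_ac)
  qed
  then have "deriv (\<lambda>z. \<Sum>k\<in>K. c k * falling_fact (e k) m * (z + a) ^ (e k - m)) z
           = (\<Sum>k\<in>K. c k * falling_fact (e k) (Suc m) * (z + a) ^ (e k - Suc m))" for z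
    by (rule DERIV_imp_deriv)
  then show ?case
    by (simp add: Suc fun_eq_iff)
qed simp

lemma higher_deriv_power_sum:
  fixes c :: "nat \<Rightarrow> 'a::real_normed_field"
  assumes "finite K"
  shows "(deriv ^^ m) (\<lambda>z. \<Sum>k\<in>K. c k * z ^ e k)
       = (\<lambda>z. \<Sum>k\<in>K. c k * falling_fact (e k) m * z ^ (e k - m))"
  using higher_deriv_shifted_power_sum[OF assms, of m c 0 e] by simp

definition deriv_power_Ln :: "nat \<Rightarrow> nat \<Rightarrow> complex \<Rightarrow> complex" where
  "deriv_power_Ln j m w =
     (if m \<le> j then falling_fact j m * w ^ (j - m) * (Ln w + (harm j - harm (j - m)))
      else (-1) ^ (m - j - 1) * fact j * fact (m - j - 1) / w ^ (m - j))"

lemma deriv_power_Ln_0: "deriv_power_Ln j 0 w = w ^ j * Ln w"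
  by (simp add: deriv_power_Ln_def)

lemma has_field_derivative_power_Ln:
  assumes "w \<notin> \<real>\<^sub>\<le>\<^sub>0"
  shows "((\<lambda>w. w ^ Suc q * (Ln w + c)) has_field_derivative
           of_nat (Suc q) * w ^ q * (Ln w + c + 1 / of_nat (Suc q))) (at w)"
proof -
  have "w \<noteq> 0" using assms by auto
  have "((\<lambda>w. w ^ Suc q * (Ln w + c)) has_field_derivative
           of_nat (Suc q) * w ^ q * 1 * (Ln w + c) + w ^ Suc q * (inverse w + 0)) (at w)"
    using assms by (intro derivative_eq_intros) auto
  then show ?thesis
    by (rule DERIV_cong) (use \<open>w \<noteq> 0\<close> in \<open>simp add: field_simps del: of_nat_Suc\<close>)
qed

lemma has_field_derivative_divide_power:
  fixes K w :: "'a::real_normed_field"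
  assumes "w \<noteq> 0"
  shows "((\<lambda>w. K / w ^ Suc q) has_field_derivative - K * of_nat (Suc q) / w ^ Suc (Suc q)) (at w)"
proof -
  have "((\<lambda>w. w ^ Suc q) has_field_derivative of_nat (Suc q) * w ^ q) (at w)"
    using DERIV_power[OF DERIV_ident, of "Suc q" w] by simp
  then have "((\<lambda>w. K * inverse (w ^ Suc q)) has_field_derivative
      K * - (of_nat (Suc q) * w ^ q * inverse ((w ^ Suc q) ^ Suc (Suc 0)))) (at w)"
    using assms by (intro DERIV_cmult DERIV_inverse_fun) auto
  moreover have "K * - (of_nat (Suc q) * w ^ q * inverse ((w ^ Suc q) ^ Suc (Suc 0)))
      = - K * of_nat (Suc q) / w ^ Suc (Suc q)"
    using assms by (simp add: field_simps del: of_nat_Suc)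
  ultimately show ?thesis
    unfolding divide_inverse[of K] by (rule DERIV_cong)
qed

lemma has_field_derivative_deriv_power_Ln:
  assumes "w \<notin> \<real>\<^sub>\<le>\<^sub>0"
  shows "(deriv_power_Ln j m has_field_derivative deriv_power_Ln j (Suc m) w) (at w)"
proof -
  consider q where "j = m + Suc q" | "m = j" | q where "m = j + Suc q"
    by (metis add_Suc_right less_iff_Suc_add linorder_neqE_nat)
  then show ?thesis
  proof cases
    case 1
    then have "j - m = Suc q" "j - Suc m = q" "m \<le> j" "Suc m \<le> j" by auto
    then have "deriv_power_Ln j m =
        (\<lambda>w. falling_fact j m * (w ^ Suc q * (Ln w + (harm j - harm (Suc q)))))"
      by (simp add: deriv_power_Ln_def fun_eq_iff mult.assoc)
    moreover have "deriv_power_Ln j (Suc m) w = falling_fact j m *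
        (of_nat (Suc q) * w ^ q * (Ln w + (harm j - harm (Suc q)) + 1 / of_nat (Suc q)))"
      using \<open>j - m = Suc q\<close> \<open>j - Suc m = q\<close> \<open>Suc m \<le> j\<close>
      by (simp add: deriv_power_Ln_def falling_fact_Suc harm_Suc divide_inverse algebra_simps
          del: of_nat_Suc)
    ultimately show ?thesis
      by (simp only:) (intro DERIV_cmult has_field_derivative_power_Ln assms)
  next
    case 2
    then have "deriv_power_Ln j m = (\<lambda>w. fact j * (Ln w + harm j))"
      and "deriv_power_Ln j (Suc m) w = fact j * (inverse w + 0)"
      by (simp_all add: deriv_power_Ln_def falling_fact_eq_fact harm_altdef[of 0] fun_eq_iff divide_inverse)
    then show ?thesis
      by (simp only:) (intro DERIV_cmult DERIV_add has_field_derivative_Ln DERIV_const assms)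
  next
    case 3
    then have "\<not> m \<le> j" "m - j = Suc q" "\<not> Suc m \<le> j" "Suc m - j = Suc (Suc q)" by auto
    then have "deriv_power_Ln j m = (\<lambda>w. (-1) ^ q * fact j * fact q / w ^ Suc q)"
      and "deriv_power_Ln j (Suc m) w = - ((-1) ^ q * fact j * fact q) * of_nat (Suc q) / w ^ Suc (Suc q)"
      by (simp_all add: deriv_power_Ln_def fun_eq_iff del: of_nat_Suc)
    then show ?thesis
      using assms by (simp only:) (intro has_field_derivative_divide_power, auto)
  qed
qed

lemma higher_deriv_shifted_power_Ln_sum:
  assumes "z + a \<notin> \<real>\<^sub>\<le>\<^sub>0" "finite J"
  shows "(deriv ^^ m) (\<lambda>z. \<Sum>j\<in>J. b j * ((z + a) ^ j * Ln (z + a))) z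
       = (\<Sum>j\<in>J. b j * deriv_power_Ln j m (z + a))"
proof -
  \<comment> \<open>\<open>(deriv ^^ Suc m) f z\<close> depends on \<open>(deriv ^^ m) f\<close> near \<open>z\<close>, so the induction runs on an open set.\<close>
  define S where "S = {u. u + a \<notin> \<real>\<^sub>\<le>\<^sub>0}"
  have "S = (\<lambda>u. u + a) -` (- \<real>\<^sub>\<le>\<^sub>0)"
    by (auto simp: S_def)
  then have "open S"
    by (auto intro!: continuous_open_vimage continuous_intros)
  have "\<forall>z\<in>S. (deriv ^^ m) (\<lambda>z. \<Sum>j\<in>J. b j * ((z + a) ^ j * Ln (z + a))) z
              = (\<Sum>j\<in>J. b j * deriv_power_Ln j m (z + a))"
  proof (induction m)
    case 0
    show ?case by (simp add: deriv_power_Ln_0)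
  next
    case (Suc m)
    show ?case
    proof
      fix z assume "z \<in> S"
      have "((\<lambda>z. deriv_power_Ln j m (z + a)) has_field_derivative
              deriv_power_Ln j (Suc m) (z + a) * 1) (at z)" for j
        using \<open>z \<in> S\<close> unfolding S_def
        by (intro DERIV_chain2[OF has_field_derivative_deriv_power_Ln] derivative_eq_intros) auto
      then have "((\<lambda>z. \<Sum>j\<in>J. b j * deriv_power_Ln j m (z + a)) has_field_derivative
                  (\<Sum>j\<in>J. b j * deriv_power_Ln j (Suc m) (z + a))) (at z)"
        by (intro DERIV_sum DERIV_cmult) simp
      then have "((deriv ^^ m) (\<lambda>z. \<Sum>j\<in>J. b j * ((z + a) ^ j * Ln (z + a))) has_field_derivative
                  (\<Sum>j\<in>J. b j * deriv_power_Ln j (Suc m) (z + a))) (at z)"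
        by (rule has_field_derivative_transform_within_open[OF _ \<open>open S\<close> \<open>z \<in> S\<close>])
          (use Suc in auto)
      then show "(deriv ^^ Suc m) (\<lambda>z. \<Sum>j\<in>J. b j * ((z + a) ^ j * Ln (z + a))) z
               = (\<Sum>j\<in>J. b j * deriv_power_Ln j (Suc m) (z + a))"
        by (simp add: DERIV_imp_deriv)
    qed
  qed
  then show ?thesis
    using assms(1) by (simp add: S_def)
qed

lemma power_diff_sq_eq_1:
  fixes x :: "'a::comm_monoid_mult"
  assumes "x\<^sup>2 = 1" "j \<le> n"
  shows "x ^ (n - j) = x ^ n * x ^ j"
proof -
  have "x ^ n * x ^ j = x ^ (n - j) * (x\<^sup>2) ^ j"
    using assms(2) by (simp add: power2_eq_square power_mult_distrib mult.assoc flip: power_add)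
  then show ?thesis
    using assms(1) by simp
qed

lemma square_minus_one_power_expand:
  fixes z :: "'a::comm_ring_1"
  shows "(z\<^sup>2 - 1) ^ n = (\<Sum>k\<le>n. (-1) ^ k * of_nat (n choose k) * z ^ (2*n - 2*k))"
proof -
  have "(z\<^sup>2 - 1) ^ n = (-1 + z\<^sup>2) ^ n"
    by simp
  also have "\<dots> = (\<Sum>k\<le>n. of_nat (n choose k) * (-1) ^ k * (z\<^sup>2) ^ (n - k))"
    by (rule binomial_ring)
  also have "\<dots> = (\<Sum>k\<le>n. (-1) ^ k * of_nat (n choose k) * z ^ (2*n - 2*k))"
    by (intro sum.cong refl) (simp add: mult_ac diff_mult_distrib flip: power_mult)
  finally show ?thesis .
qed

lemma square_minus_one_power_shifted_expand:
  fixes z \<epsilon> :: "'a::comm_ring_1"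
  assumes "\<epsilon>\<^sup>2 = 1"
  shows "(z\<^sup>2 - 1) ^ n = (\<Sum>j\<le>n. of_nat (n choose j) * (-2*\<epsilon>) ^ (n - j) * (z + \<epsilon>) ^ (n + j))"
proof -
  have "z\<^sup>2 - 1 = (z + \<epsilon>) * ((z + \<epsilon>) + (-2*\<epsilon>))"
    using assms by (simp add: algebra_simps power2_eq_square)
  then have "(z\<^sup>2 - 1) ^ n = (z + \<epsilon>) ^ n * (\<Sum>j\<le>n. of_nat (n choose j) * (z + \<epsilon>) ^ j * (-2*\<epsilon>) ^ (n - j))"
    by (simp only: power_mult_distrib binomial_ring)
  then show ?thesis
    by (simp add: sum_distrib_left power_add mult_ac)
qed

lemma legendreP_Rodrigues:
  "legendreP n z = (deriv ^^ n) (\<lambda>z. (z\<^sup>2 - 1) ^ n) z / (2 ^ n * fact n)"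
proof -
  have "(deriv ^^ n) (\<lambda>z. (z\<^sup>2 - 1) ^ n) z
      = (\<Sum>k\<le>n. (-1) ^ k * of_nat (n choose k) * falling_fact (2*n - 2*k) n * z ^ (2*n - 2*k - n))"
    by (simp add: square_minus_one_power_expand higher_deriv_power_sum)
  also have "\<dots> = (\<Sum>k\<le>n div 2. (-1) ^ k * of_nat (n choose k) * of_nat ((2*n - 2*k) choose n)
                        * z ^ (n - 2*k) * fact n)"
  proof (rule sum.mono_neutral_cong_right)
    fix k assume "k \<in> {..n div 2}"
    then have k: "2*k \<le> n" "2*n - 2*k - n = n - 2*k" by auto
    have "falling_fact (2*n - 2*k) n = (fact (2*n - 2*k) / fact (n - 2*k) :: complex)"
      using k by (subst falling_fact_eq_fact) auto
    moreover have "(of_nat ((2*n - 2*k) choose n) :: complex) = fact (2*n - 2*k) / (fact n * fact (n - 2*k))"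
      using k by (subst binomial_fact) auto
    ultimately show "(-1) ^ k * of_nat (n choose k) * falling_fact (2*n - 2*k) n * z ^ (2*n - 2*k - n)
        = (-1) ^ k * of_nat (n choose k) * of_nat ((2*n - 2*k) choose n) * z ^ (n - 2*k) * fact n"
      using k by simp
  qed (auto simp: falling_fact_eq_0)
  finally show ?thesis
    by (simp add: legendreP_def sum_divide_distrib sum_distrib_right)
qed

definition legendre_shift_coeff :: "complex \<Rightarrow> nat \<Rightarrow> nat \<Rightarrow> complex" where
  "legendre_shift_coeff \<epsilon> n j = (-\<epsilon>) ^ (n - j) * fact (n + j) / (2 ^ j * fact j * fact j * fact (n - j))"

lemma legendreP_shifted_expand:
  assumes "\<epsilon>\<^sup>2 = 1"
  shows "legendreP n z = (\<Sum>j\<le>n. legendre_shift_coeff \<epsilon> n j * (z + \<epsilon>) ^ j)"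
proof -
  have "(deriv ^^ n) (\<lambda>z. (z\<^sup>2 - 1) ^ n) z
      = (\<Sum>j\<le>n. of_nat (n choose j) * (-2*\<epsilon>) ^ (n - j) * falling_fact (n + j) n * (z + \<epsilon>) ^ j)"
    by (simp add: square_minus_one_power_shifted_expand[OF assms] higher_deriv_shifted_power_sum)
  also have "\<dots> = (\<Sum>j\<le>n. legendre_shift_coeff \<epsilon> n j * (z + \<epsilon>) ^ j * (2 ^ n * fact n))"
  proof (intro sum.cong refl)
    fix j assume "j \<in> {..n}"
    then have j: "j \<le> n" by simp
    have ff: "falling_fact (n + j) n = (fact (n + j) / fact j :: complex)"
      by (subst falling_fact_eq_fact) auto
    have binom: "(of_nat (n choose j) :: complex) = fact n / (fact j * fact (n - j))"
      using j by (rule binomial_fact)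
    have pow2: "(-2*\<epsilon>) ^ (n - j) = (-\<epsilon>) ^ (n - j) * 2 ^ (n - j)" "(2::complex) ^ n = 2 ^ j * 2 ^ (n - j)"
      using j by (simp_all add: mult.commute flip: power_mult_distrib power_add)
    show "of_nat (n choose j) * (-2*\<epsilon>) ^ (n - j) * falling_fact (n + j) n * (z + \<epsilon>) ^ j
        = legendre_shift_coeff \<epsilon> n j * (z + \<epsilon>) ^ j * (2 ^ n * fact n)"
      unfolding ff binom pow2 legendre_shift_coeff_def by (simp add: field_simps)
  qed
  finally show ?thesis
    by (simp add: legendreP_Rodrigues sum_divide_distrib)
qed

lemma pochhammer_of_nat_plus_half:
  "pochhammer (of_nat m + 1/2 :: 'a::field_char_0) s
     = fact (2*(m + s)) * fact m / (4 ^ s * fact (m + s) * fact (2*m))"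
proof (induction s)
  case (Suc s)
  define x :: 'a where "x = of_nat m + of_nat s"
  have "x + 1 \<noteq> 0"
    using of_nat_neq_0[of "m + s", where 'a='a] by (simp add: x_def add_ac)
  have "pochhammer (of_nat m + 1/2 :: 'a) (Suc s)
      = fact (2*(m + s)) * fact m / (4 ^ s * fact (m + s) * fact (2*m)) * (x + 1/2)"
    by (simp add: pochhammer_Suc Suc x_def add_ac)
  also have "\<dots> = fact (2*(m + s)) * ((2*x + 1) * (2*x + 2)) * fact m
                   / (4 ^ Suc s * (fact (m + s) * (x + 1)) * fact (2*m))"
    using \<open>x + 1 \<noteq> 0\<close> by (simp add: divide_simps)
  also have "\<dots> = fact (2*(m + Suc s)) * fact m / (4 ^ Suc s * fact (m + Suc s) * fact (2*m))"
    by (simp add: x_def fact_Suc algebra_simps)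
  finally show ?case .
qed simp

lemma gegenbauer_term_eq_legendre_deriv_term:
  fixes z :: complex
  assumes "n = m + r + 2*k"
  shows "fact (2*m) / (2 ^ m * fact m) * ((-1) ^ k * pochhammer (of_nat m + 1/2) (n - m - k)
           / (fact k * fact (n - m - 2*k)) * (2*z) ^ (n - m - 2*k))
       = (-1) ^ k * of_nat (n choose k) * of_nat ((2*n - 2*k) choose n) / 2 ^ n
           * falling_fact (n - 2*k) m * z ^ (n - 2*k - m)"
proof -
  have idx: "n - m - k = r + k" "n - m - 2*k = r" "n - 2*k = m + r" "n - 2*k - m = r"
    "2*n - 2*k = 2*(m + r + k)" "m + (r + k) = m + r + k"
    using assms by auto
  have binom: "(of_nat (n choose k) :: complex) = fact n / (fact k * fact (m + r + k))"
    "(of_nat ((2*(m + r + k)) choose n) :: complex) = fact (2*(m + r + k)) / (fact n * fact (m + r))"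
    using assms by (subst binomial_fact; auto simp: algebra_simps)+
  have ff: "falling_fact (m + r) m = (fact (m + r) / fact r :: complex)"
    by (subst falling_fact_eq_fact) auto
  have pow: "(2::complex) ^ n = 2 ^ m * 2 ^ r * 4 ^ k" "(4::complex) ^ (r + k) = 2 ^ r * 2 ^ r * 4 ^ k"
    using assms by (simp_all add: power_add power_mult flip: power_mult_distrib)
  show ?thesis
    unfolding idx binom ff pochhammer_of_nat_plus_half pow power_mult_distrib
    by (simp add: field_simps)
qed

lemma higher_deriv_legendreP:
  assumes "m \<le> n"
  shows "(deriv ^^ m) (legendreP n) z
       = fact (2*m) / (2 ^ m * fact m) * gegenbauerC (n - m) (of_nat m + 1/2) z"
proof -
  let ?c = "\<lambda>k. (-1) ^ k * of_nat (n choose k) * of_nat ((2*n - 2*k) choose n) / 2 ^ n :: complex"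
  have "legendreP n = (\<lambda>z. \<Sum>k\<le>n div 2. ?c k * z ^ (n - 2*k))"
    by (simp add: legendreP_def fun_eq_iff sum_divide_distrib)
  then have "(deriv ^^ m) (legendreP n) z = (\<Sum>k\<le>n div 2. ?c k * falling_fact (n - 2*k) m * z ^ (n - 2*k - m))"
    by (simp only: higher_deriv_power_sum[OF finite_atMost])
  also have "\<dots> = (\<Sum>k\<le>(n - m) div 2. fact (2*m) / (2 ^ m * fact m)
      * ((-1) ^ k * pochhammer (of_nat m + 1/2) (n - m - k) / (fact k * fact (n - m - 2*k))
         * (2*z) ^ (n - m - 2*k)))"
  proof (rule sum.mono_neutral_cong_right)
    fix k assume "k \<in> {..(n - m) div 2}"
    then have "n = m + (n - m - 2*k) + 2*k"
      using assms by auto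
    then show "?c k * falling_fact (n - 2*k) m * z ^ (n - 2*k - m)
      = fact (2*m) / (2 ^ m * fact m) * ((-1) ^ k * pochhammer (of_nat m + 1/2) (n - m - k)
         / (fact k * fact (n - m - 2*k)) * (2*z) ^ (n - m - 2*k))"
      by (simp only: gegenbauer_term_eq_legendre_deriv_term)
  qed (auto simp: falling_fact_eq_0)
  finally show ?thesis
    by (simp add: gegenbauerC_def sum_distrib_left)
qed

lemma higher_deriv_legendreP_shifted:
  assumes "\<epsilon>\<^sup>2 = 1"
  shows "(deriv ^^ m) (legendreP n) z
       = (\<Sum>j\<in>{m..n}. legendre_shift_coeff \<epsilon> n j * falling_fact j m * (z + \<epsilon>) ^ (j - m))"
proof -
  have "legendreP n = (\<lambda>z. \<Sum>j\<le>n. legendre_shift_coeff \<epsilon> n j * (z + \<epsilon>) ^ j)"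
    by (simp add: fun_eq_iff legendreP_shifted_expand[OF assms])
  then have "(deriv ^^ m) (legendreP n) z
      = (\<Sum>j\<le>n. legendre_shift_coeff \<epsilon> n j * falling_fact j m * (z + \<epsilon>) ^ (j - m))"
    by (simp only: higher_deriv_shifted_power_sum[OF finite_atMost])
  also have "\<dots> = (\<Sum>j\<in>{m..n}. legendre_shift_coeff \<epsilon> n j * falling_fact j m * (z + \<epsilon>) ^ (j - m))"
    by (rule sum.mono_neutral_cong_right) (auto simp: falling_fact_eq_0)
  finally show ?thesis .
qed

lemma higher_deriv_legendreP_Ln:
  assumes "\<epsilon>\<^sup>2 = 1" "z + \<epsilon> \<notin> \<real>\<^sub>\<le>\<^sub>0"
  shows "(deriv ^^ m) (\<lambda>w. legendreP n w * Ln (w + \<epsilon>)) z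
       = (\<Sum>j\<le>n. legendre_shift_coeff \<epsilon> n j * deriv_power_Ln j m (z + \<epsilon>))"
proof -
  have "(\<lambda>w. legendreP n w * Ln (w + \<epsilon>))
      = (\<lambda>w. \<Sum>j\<le>n. legendre_shift_coeff \<epsilon> n j * ((w + \<epsilon>) ^ j * Ln (w + \<epsilon>)))"
    by (simp add: legendreP_shifted_expand[OF assms(1)] sum_distrib_right mult.assoc fun_eq_iff)
  then show ?thesis
    using higher_deriv_shifted_power_Ln_sum[OF assms(2) finite_atMost] by simp
qed

lemma sum_deriv_power_Ln_regular:
  assumes "\<And>j. j \<in> J \<Longrightarrow> m \<le> j"
  shows "(\<Sum>j\<in>J. b j * deriv_power_Ln j m w)
       = (\<Sum>j\<in>J. b j * falling_fact j m * w ^ (j - m)) * Ln w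
         + (\<Sum>j\<in>J. b j * falling_fact j m * w ^ (j - m) * (harm j - harm (j - m)))"
proof -
  have "(\<Sum>j\<in>J. b j * deriv_power_Ln j m w) = (\<Sum>j\<in>J. b j * falling_fact j m * w ^ (j - m) * Ln w
         + b j * falling_fact j m * w ^ (j - m) * (harm j - harm (j - m)))"
    using assms by (intro sum.cong refl) (simp add: deriv_power_Ln_def algebra_simps)
  then show ?thesis
    by (simp add: sum.distrib sum_distrib_right)
qed

lemma legendre_shift_harmonic_sum:
  assumes "\<epsilon>\<^sup>2 = 1" "m \<le> n"
  shows "(\<Sum>j\<in>{m..n}. legendre_shift_coeff \<epsilon> n j * falling_fact j m * w ^ (j - m) * (harm j - harm (j - m)))
       = (-\<epsilon>) ^ (n + m) / 2 ^ m *
          (\<Sum>k\<le>n - m. (-\<epsilon>) ^ k * fact (k + n + m) / (fact k * fact (k + m) * fact (n - m - k))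
                  * (Digamma (of_nat (k + m + 1)) - Digamma (of_nat (k + 1))) * (w / 2) ^ k)"
proof -
  have "(\<Sum>j\<in>{m..n}. legendre_shift_coeff \<epsilon> n j * falling_fact j m * w ^ (j - m) * (harm j - harm (j - m)))
      = (\<Sum>k\<le>n - m. legendre_shift_coeff \<epsilon> n (m + k) * falling_fact (m + k) m * w ^ k * (harm (m + k) - harm k))"
    by (simp add: sum.atLeastAtMost_shift_0[OF assms(2)] atLeast0AtMost)
  also have "\<dots> = (\<Sum>k\<le>n - m. (-\<epsilon>) ^ (n + m) / 2 ^ m *
      ((-\<epsilon>) ^ k * fact (k + n + m) / (fact k * fact (k + m) * fact (n - m - k))
         * (Digamma (of_nat (k + m + 1)) - Digamma (of_nat (k + 1))) * (w / 2) ^ k))"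
  proof (intro sum.cong refl)
    fix k assume "k \<in> {..n - m}"
    then have k: "m + k \<le> n" using assms(2) by auto
    have "Digamma (of_nat (k + m + 1)) = (harm (m + k) :: complex) - euler_mascheroni"
      "Digamma (of_nat (k + 1)) = (harm k :: complex) - euler_mascheroni"
      by (metis Digamma_of_nat Suc_eq_plus1 add.commute)+
    then have digamma: "Digamma (of_nat (k + m + 1)) - Digamma (of_nat (k + 1)) = (harm (m + k) - harm k :: complex)"
      by simp
    have sign: "(-\<epsilon>) ^ (n - (m + k)) = (-\<epsilon>) ^ n * (-\<epsilon>) ^ m * (-\<epsilon>) ^ k"
      using power_diff_sq_eq_1[of "-\<epsilon>", OF _ k] assms(1) by (simp add: power_add mult.assoc)
    have ff: "falling_fact (m + k) m = (fact (m + k) / fact k :: complex)"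
      by (subst falling_fact_eq_fact) auto
    have idx: "n - (m + k) = n - m - k" "n + (m + k) = k + n + m" "m + k = k + m"
      using k by auto
    show "legendre_shift_coeff \<epsilon> n (m + k) * falling_fact (m + k) m * w ^ k * (harm (m + k) - harm k)
      = (-\<epsilon>) ^ (n + m) / 2 ^ m * ((-\<epsilon>) ^ k * fact (k + n + m) / (fact k * fact (k + m) * fact (n - m - k))
         * (Digamma (of_nat (k + m + 1)) - Digamma (of_nat (k + 1))) * (w / 2) ^ k)"
      unfolding digamma legendre_shift_coeff_def sign ff unfolding idx
      by (simp add: field_simps power_add power_divide)
  qed
  finally show ?thesis
    by (simp add: sum_distrib_left)
qed

lemma legendre_shift_pole_sum:
  assumes "\<epsilon>\<^sup>2 = 1" "m \<le> n" "w \<noteq> 0"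
  shows "(\<Sum>j<m. legendre_shift_coeff \<epsilon> n j * deriv_power_Ln j m w)
       = - ((-\<epsilon>) ^ n * (-1) ^ m * inverse (w ^ m) *
            (\<Sum>k<m. \<epsilon> ^ k * (fact (k + n) * fact (m - k - 1)) / (fact k * fact (n - k)) * (w / 2) ^ k))"
proof -
  have "legendre_shift_coeff \<epsilon> n j * deriv_power_Ln j m w
      = - ((-\<epsilon>) ^ n * (-1) ^ m * inverse (w ^ m) *
           (\<epsilon> ^ j * (fact (j + n) * fact (m - j - 1)) / (fact j * fact (n - j)) * (w / 2) ^ j))"
    if "j < m" for j
  proof -
    have "(-\<epsilon>) ^ (n - j) = (-\<epsilon>) ^ n * (-\<epsilon>) ^ j"
      using assms that by (intro power_diff_sq_eq_1) auto
    moreover have "(-1::complex) ^ (m - Suc j) = (-1) ^ m * (-1) ^ Suc j"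
      using that by (intro power_diff_sq_eq_1) auto
    moreover have "(-\<epsilon>) ^ j * (-1) ^ j = \<epsilon> ^ j"
      by (simp flip: power_mult_distrib)
    ultimately have sign: "(-\<epsilon>) ^ (n - j) * (-1) ^ (m - Suc j) = - ((-\<epsilon>) ^ n * (-1) ^ m * \<epsilon> ^ j)"
      by (simp add: ac_simps)
    have "legendre_shift_coeff \<epsilon> n j * deriv_power_Ln j m w
        = ((-\<epsilon>) ^ (n - j) * (-1) ^ (m - Suc j))
          * (fact (n + j) * fact (m - Suc j) / (2 ^ j * fact j * fact (n - j))) * (1 / w ^ (m - j))"
      using that by (simp add: legendre_shift_coeff_def deriv_power_Ln_def ac_simps)
    also have "\<dots> = - ((-\<epsilon>) ^ n * (-1) ^ m * inverse (w ^ j * w ^ (m - j)) *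
           (\<epsilon> ^ j * (fact (j + n) * fact (m - j - 1)) / (fact j * fact (n - j)) * (w / 2) ^ j))"
      unfolding sign using assms(3) by (simp add: field_simps power_divide add.commute)
    also have "w ^ j * w ^ (m - j) = w ^ m"
      using that by (simp flip: power_add)
    finally show ?thesis .
  qed
  then show ?thesis
    by (simp add: sum_distrib_left sum_negf)
qed

theorem mainTheorem4:
  fixes m n :: nat and \<epsilon> z :: complex
  assumes "m \<le> n"
    and "\<epsilon> = 1 \<or> \<epsilon> = -1"
    and "\<not> (Im z = 0 \<and> Re z \<le> 1)"
  shows "(deriv ^^ m) (\<lambda>w. legendreP n w * Ln (w + \<epsilon>)) z =
     fact (2*m) / (2^m * fact m) * gegenbauerC (n - m) (of_nat m + 1/2) z * Ln (z + \<epsilon>)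
     - (-\<epsilon>)^n * (-1)^m * inverse ((z + \<epsilon>)^m) *
        (\<Sum>k<m. \<epsilon>^k * (fact (k + n) * fact (m - k - 1)) / (fact k * fact (n - k))
                  * ((z + \<epsilon>) / 2)^k)
     + (-\<epsilon>)^(n + m) / 2^m *
        (\<Sum>k\<le>n - m. (-\<epsilon>)^k * fact (k + n + m) / (fact k * fact (k + m) * fact (n - m - k))
                  * (Digamma (of_nat (k + m + 1)) - Digamma (of_nat (k + 1)))
                  * ((z + \<epsilon>) / 2)^k)"
proof -
  have eps: "\<epsilon>\<^sup>2 = 1"
    using assms(2) by auto
  have cut: "z + \<epsilon> \<notin> \<real>\<^sub>\<le>\<^sub>0"
    using assms(2,3) by (auto simp: complex_nonpos_Reals_iff)
  then have "z + \<epsilon> \<noteq> 0"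
    by auto
  have split: "{..n} = {..<m} \<union> {m..n}"
    using assms(1) by auto
  have "(deriv ^^ m) (\<lambda>w. legendreP n w * Ln (w + \<epsilon>)) z
      = (\<Sum>j<m. legendre_shift_coeff \<epsilon> n j * deriv_power_Ln j m (z + \<epsilon>))
        + (\<Sum>j\<in>{m..n}. legendre_shift_coeff \<epsilon> n j * deriv_power_Ln j m (z + \<epsilon>))"
    unfolding higher_deriv_legendreP_Ln[OF eps cut] split by (rule sum.union_disjoint) auto
  also have "(\<Sum>j\<in>{m..n}. legendre_shift_coeff \<epsilon> n j * deriv_power_Ln j m (z + \<epsilon>))
      = (\<Sum>j\<in>{m..n}. legendre_shift_coeff \<epsilon> n j * falling_fact j m * (z + \<epsilon>) ^ (j - m)) * Ln (z + \<epsilon>)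
        + (\<Sum>j\<in>{m..n}. legendre_shift_coeff \<epsilon> n j * falling_fact j m * (z + \<epsilon>) ^ (j - m)
             * (harm j - harm (j - m)))"
    by (rule sum_deriv_power_Ln_regular) simp
  also have "(\<Sum>j\<in>{m..n}. legendre_shift_coeff \<epsilon> n j * falling_fact j m * (z + \<epsilon>) ^ (j - m))
      = fact (2*m) / (2^m * fact m) * gegenbauerC (n - m) (of_nat m + 1/2) z"
    by (simp only: higher_deriv_legendreP_shifted[OF eps, symmetric] higher_deriv_legendreP[OF assms(1)])
  finally show ?thesis
    by (simp add: legendre_shift_pole_sum[OF eps assms(1) \<open>z + \<epsilon> \<noteq> 0\<close>]
        legendre_shift_harmonic_sum[OF eps assms(1)])
qed

end
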